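(* Let $X$ be an infinite dimensional separable Banach space and $T:X\to X$ a continuous linear operator such that $(X,T)$ is topologically transitive. Then $(X,T)$ is thickly multi-sensitive: there exists $\delta>0$ such that $\bigcap_{i=1}^kS_T(U_i,\delta)$ is thick for every finite collection of nonempty open sets $U_1,\dots,U_k\subset X$.
   Context: $(X,T)$ is topologically transitive if $\{n\in\mathbb{Z}_+:U\cap T^{-n}V\neq\varnothing\}\neq\varnothing$ for all nonempty open $U,V\subset X$. $S_T(U,\delta)=\{n\in\mathbb{Z}_+:\exists x_1,x_2\in U,\ \|T^nx_1-T^nx_2\|>\delta\}$. A set $F\subset\mathbb{Z}_+$ is thick if it contains arbitrarily long runs of consecutive integers. *)

theory Defs
  imports "HOL-Analysis.Analysis"
begin

definition top_transitive :: "('a::topological_space \<Rightarrow> 'a) \<Rightarrow> bool" where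
  "top_transitive T \<longleftrightarrow>
     (\<forall>U V. open U \<and> U \<noteq> {} \<and> open V \<and> V \<noteq> {} \<longrightarrow>
        {n::nat. U \<inter> (T ^^ n) -` V \<noteq> {}} \<noteq> {})"

definition sens_set :: "('a::real_normed_vector \<Rightarrow> 'a) \<Rightarrow> 'a set \<Rightarrow> real \<Rightarrow> nat set" where
  "sens_set T U \<delta> = {n. \<exists>x1\<in>U. \<exists>x2\<in>U. norm ((T ^^ n) x1 - (T ^^ n) x2) > \<delta>}"

definition thick :: "nat set \<Rightarrow> bool" where
  "thick F \<longleftrightarrow> (\<forall>L. \<exists>m. {m..<m+L} \<subseteq> F)"

definition thickly_multi_sensitive :: "('a::real_normed_vector \<Rightarrow> 'a) \<Rightarrow> bool" where
  "thickly_multi_sensitive T \<longleftrightarrow>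
     (\<exists>\<delta>>0. \<forall>(k::nat) (U::nat \<Rightarrow> 'a set).
        (\<forall>i\<in>{1..k}. open (U i) \<and> U i \<noteq> {}) \<longrightarrow>
        thick (\<Inter>i\<in>{1..k}. sens_set T (U i) \<delta>))"

end

theory Submission
  imports Defs
begin

text \<open>Transitivity forces every power \<open>T\<^sup>m\<close> of a linear operator on a nontrivial
space to be nonzero; hence for each \<open>L\<close> the open set of vectors whose first \<open>L\<close> iterates
all have norm \<open>> \<delta>\<close> is nonempty. Given \<open>U\<^sub>1, \<dots>, U\<^sub>k\<close>, pick \<open>c\<^sub>i \<in> U\<^sub>i\<close> and a
neighbourhood \<open>W\<close> of \<open>0\<close> with \<open>c\<^sub>i + W \<subseteq> U\<^sub>i\<close>. Transitivity moves some \<open>x \<in> W\<close> into that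
set at time \<open>n\<close>, and by linearity the pairs \<open>c\<^sub>i, c\<^sub>i + x\<close> are \<open>\<delta>\<close>-separated at all times
\<open>n, \<dots>, n + L - 1\<close>. So every \<open>\<delta> > 0\<close> witnesses thick multi-sensitivity.\<close>

lemma bounded_linear_funpow:
  fixes T :: "'a::real_normed_vector \<Rightarrow> 'a"
  assumes "bounded_linear T"
  shows "bounded_linear (T ^^ n)"
proof (induction n)
  case 0
  show ?case unfolding funpow_0 id_def by (rule bounded_linear_ident)
next
  case (Suc n)
  then show ?case using assms by (simp add: bounded_linear_compose)
qed

lemma top_transitiveE:
  assumes "top_transitive T" and "open U" "U \<noteq> {}" "open V" "V \<noteq> {}"
  obtains n x where "x \<in> U" "(T ^^ n) x \<in> V"
  using assms unfolding top_transitive_def by blast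

lemma top_transitive_disjoint:
  assumes "top_transitive T"
    and "open U" "U \<noteq> {}" "open V" "V \<noteq> {}" "U \<inter> V = {}"
  obtains n x where "n > 0" "x \<in> U" "(T ^^ n) x \<in> V"
proof -
  obtain n x where x: "x \<in> U" "(T ^^ n) x \<in> V"
    using top_transitiveE[OF assms(1-5)] .
  moreover have "n \<noteq> 0"
    using x \<open>U \<inter> V = {}\<close> by (intro notI) auto
  ultimately show thesis using that by blast
qed

lemma top_transitive_funpow_nonzero:
  fixes T :: "'a::real_normed_vector \<Rightarrow> 'a"
  assumes bl: "bounded_linear T" and tr: "top_transitive T"
    and nontrivial: "\<exists>y::'a. y \<noteq> 0"
  shows "\<exists>y. (T ^^ m) y \<noteq> 0"
proof (induction m)
  case 0
  then show ?case using nontrivial by simp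
next
  case (Suc m)
  then obtain y where y: "(T ^^ m) y \<noteq> 0" by blast
  have blm: "bounded_linear (T ^^ m)" using bounded_linear_funpow[OF bl] .
  then have "y \<noteq> 0" using y by (metis bounded_linear.linear linear_0)
  have scaled: "(T ^^ m) ((a / norm y) *\<^sub>R y) \<noteq> 0" if "a > 0" for a
    using y \<open>y \<noteq> 0\<close> that blm by (simp add: linear_scale bounded_linear.linear)
  define N where "N = (T ^^ m) -` (- {0})"
  have "open N"
    unfolding N_def using blm
    by (intro continuous_open_vimage open_Compl linear_continuous_at) auto
  define U where "U = N \<inter> ball 0 1"
  define V where "V = N - cball 0 1"
  have "open U" "open V" unfolding U_def V_def using \<open>open N\<close> by auto
  moreover have "((1/2) / norm y) *\<^sub>R y \<in> U" "(2 / norm y) *\<^sub>R y \<in> V"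
    using scaled[of "1/2"] scaled[of 2] \<open>y \<noteq> 0\<close> unfolding U_def V_def N_def by auto
  moreover have "U \<inter> V = {}" unfolding U_def V_def by auto
  \<comment> \<open>\<open>U\<close> and \<open>V\<close> are disjoint so that the return time is positive, giving \<open>T\<^sup>m\<^sup>+\<^sup>1 \<noteq> 0\<close>.\<close>
  ultimately obtain n x where "n > 0" "x \<in> U" "(T ^^ n) x \<in> V"
    using top_transitive_disjoint[OF tr] by blast
  then have "(T ^^ (m + n)) x \<noteq> 0" unfolding V_def N_def by (simp add: funpow_add)
  moreover have "m + n = Suc m + (n - 1)" using \<open>n > 0\<close> by simp
  ultimately have "(T ^^ Suc m) ((T ^^ (n - 1)) x) \<noteq> 0" by (metis comp_apply funpow_add)
  then show ?case by blast
qed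

lemma bounded_linear_funpow_nonzero_le:
  fixes T :: "'a::real_normed_vector \<Rightarrow> 'a"
  assumes "bounded_linear T" and "(T ^^ L) y \<noteq> 0" and "j \<le> L"
  shows "(T ^^ j) y \<noteq> 0"
proof
  assume "(T ^^ j) y = 0"
  have "(T ^^ L) y = (T ^^ (L - j)) ((T ^^ j) y)"
    using \<open>j \<le> L\<close> by (metis comp_apply funpow_add le_add_diff_inverse2)
  also have "\<dots> = 0"
    using \<open>(T ^^ j) y = 0\<close> bounded_linear_funpow[OF \<open>bounded_linear T\<close>]
    by (simp add: linear_simps)
  finally show False using assms(2) by simp
qed

lemma funpow_norm_gt_witness:
  fixes T :: "'a::real_normed_vector \<Rightarrow> 'a"
  assumes bl: "bounded_linear T" and "(T ^^ L) y \<noteq> 0"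
  obtains z where "\<And>j. j < L \<Longrightarrow> r < norm ((T ^^ j) z)"
proof -
  define c where "c = Min ((\<lambda>j. norm ((T ^^ j) y)) ` {..L})"
  have "c > 0"
    unfolding c_def using bounded_linear_funpow_nonzero_le[OF bl \<open>(T ^^ L) y \<noteq> 0\<close>]
    by (subst Min_gr_iff) auto
  have c_le: "c \<le> norm ((T ^^ j) y)" if "j \<le> L" for j
    unfolding c_def using that by (intro Min_le) auto
  define z where "z = ((\<bar>r\<bar> + 1) / c) *\<^sub>R y"
  have "r < norm ((T ^^ j) z)" if "j < L" for j
  proof -
    have "r < ((\<bar>r\<bar> + 1) / c) * c" using \<open>c > 0\<close> by simp
    also have "\<dots> \<le> ((\<bar>r\<bar> + 1) / c) * norm ((T ^^ j) y)"
      using c_le[of j] that \<open>c > 0\<close> by (intro mult_left_mono) auto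
    also have "\<dots> = norm ((T ^^ j) z)"
      unfolding z_def using \<open>c > 0\<close> bounded_linear_funpow[OF bl]
      by (simp add: linear_simps bounded_linear.linear)
    finally show ?thesis .
  qed
  then show thesis using that by blast
qed

lemma open_funpow_norm_gt:
  fixes T :: "'a::real_normed_vector \<Rightarrow> 'a"
  assumes "bounded_linear T"
  shows "open {w. \<forall>j<L. r < norm ((T ^^ j) w)}"
proof -
  have "{w. \<forall>j<L. r < norm ((T ^^ j) w)} = (\<Inter>j<L. {w. r < norm ((T ^^ j) w)})" by auto
  also have "open \<dots>"
    using bounded_linear_funpow[OF assms]
    by (intro open_INT finite_lessThan ballI open_Collect_less continuous_intros
        linear_continuous_on)
  finally show ?thesis .
qed

lemma common_translate_nhds:
  fixes U :: "'i \<Rightarrow> 'a::real_normed_vector set"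
  assumes "finite I" and "\<forall>i\<in>I. open (U i) \<and> U i \<noteq> {}"
  obtains W c where "open W" "0 \<in> W" "\<And>i. i \<in> I \<Longrightarrow> c i \<in> U i"
    "\<And>i x. i \<in> I \<Longrightarrow> x \<in> W \<Longrightarrow> c i + x \<in> U i"
proof -
  define c where "c i = (SOME x. x \<in> U i)" for i
  have c: "c i \<in> U i" if "i \<in> I" for i
    unfolding c_def using assms(2) that by (metis ex_in_conv someI_ex)
  define W where "W = (\<Inter>i\<in>I. (\<lambda>x. c i + x) -` U i)"
  have "open W"
    unfolding W_def using assms
    by (intro open_INT ballI continuous_open_vimage continuous_intros) auto
  moreover have "0 \<in> W" unfolding W_def using c by auto
  ultimately show thesis using that c unfolding W_def by blast
qed

lemma sens_setI_linear:
  assumes "linear (T ^^ p)" and "c \<in> U" and "c + x \<in> U" and "\<delta> < norm ((T ^^ p) x)"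
  shows "p \<in> sens_set T U \<delta>"
proof -
  have "(T ^^ p) (c + x) - (T ^^ p) c = (T ^^ p) x"
    using assms(1) by (simp add: linear_add)
  then show ?thesis unfolding sens_set_def using assms(2-4) by force
qed

lemma thick_Inter_sens_set:
  fixes T :: "'a::real_normed_vector \<Rightarrow> 'a"
  assumes bl: "bounded_linear T" and tr: "top_transitive T"
    and nonzero: "\<And>m. \<exists>y. (T ^^ m) y \<noteq> 0"
    and "finite I" and U: "\<forall>i\<in>I. open (U i) \<and> U i \<noteq> {}"
  shows "thick (\<Inter>i\<in>I. sens_set T (U i) \<delta>)"
  unfolding thick_def
proof
  fix L
  define V where "V = {w. \<forall>j<L. \<delta> < norm ((T ^^ j) w)}"
  obtain y where "(T ^^ L) y \<noteq> 0" using nonzero by blast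
  then obtain z where "\<And>j. j < L \<Longrightarrow> \<delta> < norm ((T ^^ j) z)"
    using funpow_norm_gt_witness[OF bl, where r = \<delta>] by blast
  then have "z \<in> V" unfolding V_def by blast
  obtain W c where "open W" "0 \<in> W" and c: "\<And>i. i \<in> I \<Longrightarrow> c i \<in> U i"
    and cW: "\<And>i x. i \<in> I \<Longrightarrow> x \<in> W \<Longrightarrow> c i + x \<in> U i"
    using common_translate_nhds[OF \<open>finite I\<close> U] by blast
  have "open V" unfolding V_def using open_funpow_norm_gt[OF bl] .
  obtain n x where x: "x \<in> W" "(T ^^ n) x \<in> V"
    using top_transitiveE[OF tr \<open>open W\<close> _ \<open>open V\<close>] \<open>0 \<in> W\<close> \<open>z \<in> V\<close>
    by (metis empty_iff)
  have "p \<in> sens_set T (U i) \<delta>" if "p \<in> {n..<n + L}" "i \<in> I" for p i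
  proof (rule sens_setI_linear)
    show "linear (T ^^ p)" using bounded_linear_funpow[OF bl] bounded_linear.linear by blast
    show "c i \<in> U i" "c i + x \<in> U i" using c cW x(1) \<open>i \<in> I\<close> by auto
    have "(T ^^ p) x = (T ^^ (p - n)) ((T ^^ n) x)"
      using \<open>p \<in> {n..<n + L}\<close> funpow_add[of "p - n" n T] by simp
    then show "\<delta> < norm ((T ^^ p) x)"
      using x(2) \<open>p \<in> {n..<n + L}\<close> unfolding V_def by auto
  qed
  then show "\<exists>m. {m..<m + L} \<subseteq> (\<Inter>i\<in>I. sens_set T (U i) \<delta>)" by blast
qed

theorem proposition7p2:
  fixes T :: "'a::banach \<Rightarrow> 'a"
  assumes "\<not> (\<exists>B. finite B \<and> span B = (UNIV :: 'a set))"
    and "\<exists>D::'a set. countable D \<and> closure D = UNIV"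
    and "bounded_linear T"
    and "top_transitive T"
  shows "thickly_multi_sensitive T"
proof -
  have "\<exists>y::'a. y \<noteq> 0"
  proof (rule ccontr)
    assume "\<nexists>y::'a. y \<noteq> 0"
    then have "span {} = (UNIV :: 'a set)" by auto
    then show False using assms(1) by blast
  qed
  then have "\<And>m. \<exists>y. (T ^^ m) y \<noteq> 0"
    using top_transitive_funpow_nonzero[OF assms(3,4)] by blast
  then have "thick (\<Inter>i\<in>{1..k}. sens_set T (U i) 1)"
    if "\<forall>i\<in>{1..k}. open (U i) \<and> U i \<noteq> {}" for k and U :: "nat \<Rightarrow> 'a set"
    using thick_Inter_sens_set[OF assms(3,4) _ finite_atLeastAtMost that] by blast
  then show ?thesis unfolding thickly_multi_sensitive_def by (intro exI[of _ 1]) auto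
qed

end
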